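(* Assume the setting of the context. If $V(\phi_R)>\sin^2\!\left(\frac{\phi_R-\phi_m}{2}\right)V(\phi_m)$, then $v_3<0$.
   Context: Let $\phi_a<\phi_b$ with $\phi_b-\phi_a\le\pi$, $\phi_m=(\phi_a+\phi_b)/2$. Let $V:(\phi_a,\phi_b)\to(0,\infty)$ be $V(\phi)=\frac{\beta_1}{\sin(\phi_b-\phi)}+\frac{\beta_2}{\sin(\phi-\phi_a)}+\widehat V(\phi)$ with constants $\beta_1>0$, $\beta_2\ge0$, where $\beta_2=0$ if and only if $\phi_b-\phi_a=\pi$, and $\widehat V>0$ a bounded $C^3$ function on $[\phi_a,\phi_b]$. Assume $V$ is symmetric about $\phi_m$ and has exactly three critical points $\phi_L<\phi_m<\phi_R$ in $(\phi_a,\phi_b)$, all non-degenerate. Let $f(\phi)=\sin(\phi-\phi_a)\sin(\phi_b-\phi)$ if $\phi_b-\phi_a<\pi$ and $f(\phi)=\sin(\phi_b-\phi)$ if $\phi_b-\phi_a=\pi$; let $W=fV$, $F=f/\sqrt W$. (This arises from a Lagrangian $\frac12\dot r^2+\frac12r^2\dot\phi^2+V(\phi)/r$ with $v=r^{1/2}\dot r$, $w=\dot\phi\,r^{3/2}\sqrt{f/V}$ and time change $dt/ds=r^{3/2}F(\phi)$.) On the collision manifold $r=0$ the flow is ($'=d/ds$) $v'=\sqrt{W(\phi)}-\frac12F(\phi)v^2$, $\phi'=w$, $w'=-\frac{vw}{2}F(\phi)+\frac{W'(\phi)}{W(\phi)}(f(\phi)-\frac{w^2}{2})+f'(\phi)(1-\frac{f(\phi)}{W(\phi)}v^2)$,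 restricted to $\{\frac{w^2}{2f(\phi)}+\frac{f(\phi)}{W(\phi)}\frac{v^2}{2}=1\}$. The point $L'_-=(v,\phi,w)=(-\sqrt{2V(\phi_L)},\phi_L,0)$ is an equilibrium whose unstable manifold in the collision manifold is one-dimensional; let $\gamma'$ be its branch along which initially $w\ge0$, and let $v_3$ be the $v$-coordinate of the point where $\gamma'$ first reaches $\phi=\phi_m$. *)

theory Defs
  imports "HOL-Analysis.Analysis"
begin

definition C3_on :: "real \<Rightarrow> real \<Rightarrow> (real \<Rightarrow> real) \<Rightarrow> bool" where
  "C3_on a b g \<longleftrightarrow> (\<exists>g1 g2 g3. continuous_on {a..b} g3 \<and>
     (\<forall>x\<in>{a..b}. (g has_real_derivative g1 x) (at x within {a..b}) \<and>
                  (g1 has_real_derivative g2 x) (at x within {a..b}) \<and>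
                  (g2 has_real_derivative g3 x) (at x within {a..b})))"

definition Vpot :: "real \<Rightarrow> real \<Rightarrow> real \<Rightarrow> real \<Rightarrow> (real \<Rightarrow> real) \<Rightarrow> real \<Rightarrow> real" where
  "Vpot pa pb b1 b2 Vh phi = b1 / sin (pb - phi) + b2 / sin (phi - pa) + Vh phi"

definition fcoef :: "real \<Rightarrow> real \<Rightarrow> real \<Rightarrow> real" where
  "fcoef pa pb phi = (if pb - pa < pi then sin (phi - pa) * sin (pb - phi) else sin (pb - phi))"

definition Wfun :: "real \<Rightarrow> real \<Rightarrow> (real \<Rightarrow> real) \<Rightarrow> real \<Rightarrow> real" where
  "Wfun pa pb V phi = fcoef pa pb phi * V phi"

definition Ffun :: "real \<Rightarrow> real \<Rightarrow> (real \<Rightarrow> real) \<Rightarrow> real \<Rightarrow> real" where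
  "Ffun pa pb V phi = fcoef pa pb phi / sqrt (Wfun pa pb V phi)"

text \<open>Right-hand side of the flow on the collision manifold r = 0
  (components for v', phi', w').\<close>
definition coll_v :: "real \<Rightarrow> real \<Rightarrow> (real \<Rightarrow> real) \<Rightarrow> real \<Rightarrow> real \<Rightarrow> real \<Rightarrow> real" where
  "coll_v pa pb V v phi w = sqrt (Wfun pa pb V phi) - Ffun pa pb V phi * v\<^sup>2 / 2"

definition coll_w :: "real \<Rightarrow> real \<Rightarrow> (real \<Rightarrow> real) \<Rightarrow> real \<Rightarrow> real \<Rightarrow> real \<Rightarrow> real" where
  "coll_w pa pb V v phi w =
     - (v * w / 2) * Ffun pa pb V phi
     + deriv (Wfun pa pb V) phi / Wfun pa pb V phi * (fcoef pa pb phi - w\<^sup>2 / 2)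
     + deriv (fcoef pa pb) phi * (1 - fcoef pa pb phi / Wfun pa pb V phi * v\<^sup>2)"

definition on_coll_mfd :: "real \<Rightarrow> real \<Rightarrow> (real \<Rightarrow> real) \<Rightarrow> real \<Rightarrow> real \<Rightarrow> real \<Rightarrow> bool" where
  "on_coll_mfd pa pb V v phi w \<longleftrightarrow>
     w\<^sup>2 / (2 * fcoef pa pb phi) + fcoef pa pb phi / Wfun pa pb V phi * v\<^sup>2 / 2 = 1"

end

theory Submission
  imports Defs
begin

text \<open>
  The potential is a symmetric double well: V(phi_L) = V(phi_R) is its minimum on
  (phi_a, phi_m] and phi_m is a local maximum. Between consecutive critical points V is
  injective by Rolle's theorem, hence monotone; V blows up at phi_b, and if V(phi_m) did not
  exceed V(phi_L), V would increase on [phi_m, phi_b) through phi_R, so that V' would have a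
  local minimum 0 at phi_R, against non-degeneracy.

  On the collision manifold the v-equation reads v' = |w| sqrt(2V(phi) - v^2) / 2 \<ge> 0, and
  w = 0 forces v^2 = 2V(phi). Hence v increases from -sqrt(2V(phi_L)), phi stays in
  [phi_L, phi_m] up to s3 (a minimum of phi below phi_L would be a turning point with
  v > sqrt(2V(phi_L))), and while v \<le> 0 there is no turning point, so w \<ge> 0. If v(s3) \<ge> 0,
  take t \<le> s3 with v(t) = 0. Since V(phi) \<le> V(phi_m) on [phi_L, phi_m], the quantity
  arcsin(v / sqrt(2V(phi_m))) - phi/2 does not increase on (-\<infinity>, t]; comparing its values at
  -\<infinity> and at t gives arcsin sqrt(V(phi_L)/V(phi_m)) \<le> (phi_m - phi_L)/2, i.e.
  V(phi_R) = V(phi_L) \<le> sin^2((phi_R - phi_m)/2) V(phi_m).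
\<close>

lemma eventually_at_bot_exists_le:
  fixes c :: "'a::linorder"
  assumes "eventually P at_bot"
  obtains u where "u \<le> c" "P u"
proof -
  obtain N where "\<forall>n\<le>N. P n" using assms unfolding eventually_at_bot_linorder by blast
  then show ?thesis using that[of "min N c"] by simp
qed

lemma strict_mono_on_Icc_join:
  fixes f :: "real \<Rightarrow> real"
  assumes left: "strict_mono_on {a..b} f" and right: "strict_mono_on {b..c} f"
  shows "strict_mono_on {a..c} f"
proof (rule strict_mono_onI)
  fix x y assume xy: "x \<in> {a..c}" "y \<in> {a..c}" "x < y"
  consider "y \<le> b" | "b \<le> x" | "x < b" "b < y" by linarith
  then show "f x < f y"
  proof cases
    case 1
    then show ?thesis using xy strict_mono_onD[OF left, of x y] by simp
  next
    case 2
    then show ?thesis using xy strict_mono_onD[OF right, of x y] by simp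
  next
    case 3
    then have "f x < f b" "f b < f y"
      using xy strict_mono_onD[OF left, of x b] strict_mono_onD[OF right, of b y] by simp_all
    then show ?thesis by simp
  qed
qed

lemma mono_on_has_real_derivative_nonneg:
  fixes f :: "real \<Rightarrow> real"
  assumes mono: "mono_on {a..b} f" and x: "a < x" "x < b"
    and D: "(f has_real_derivative D) (at x)"
  shows "0 \<le> D"
proof (rule ccontr)
  assume "\<not> 0 \<le> D"
  then obtain d where d: "d > 0" "\<forall>h>0. h < d \<longrightarrow> f (x + h) < f x"
    using DERIV_neg_dec_right[OF D] by auto
  define h where "h = min (d / 2) (b - x)"
  have h: "0 < h" "h < d" "x + h \<le> b" using d x by (auto simp: h_def)
  then have "f (x + h) < f x" using d by blast
  moreover have "f x \<le> f (x + h)"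
    using mono_onD[OF mono, of x "x + h"] x h by simp
  ultimately show False by simp
qed

lemma inj_on_Icc_if_no_critical_points:
  fixes f :: "real \<Rightarrow> real"
  assumes cont: "continuous_on {x..y} f"
    and deriv: "\<And>z. x < z \<Longrightarrow> z < y \<Longrightarrow> (f has_real_derivative f' z) (at z)"
    and nonzero: "\<And>z. x < z \<Longrightarrow> z < y \<Longrightarrow> f' z \<noteq> 0"
  shows "inj_on f {x..y}"
proof -
  have neq: "f u \<noteq> f u'" if u: "x \<le> u" "u < u'" "u' \<le> y" for u u'
  proof
    assume "f u = f u'"
    moreover have "continuous_on {u..u'} f"
      using u by (intro continuous_on_subset[OF cont]) auto
    moreover have "f differentiable (at z)" if "u < z" "z < u'" for z
      using deriv[of z] that u by (auto simp: real_differentiable_def)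
    ultimately obtain z where z: "u < z" "z < u'" "(f has_real_derivative 0) (at z)"
      using Rolle[OF \<open>u < u'\<close>] by blast
    then have "f' z = 0" using deriv[of z] u by (simp add: DERIV_unique)
    then show False using nonzero[of z] z u by simp
  qed
  show ?thesis
  proof (rule inj_onI, rule ccontr)
    fix u u' assume "u \<in> {x..y}" "u' \<in> {x..y}" "f u = f u'" "u \<noteq> u'"
    then show False using neq[of u u'] neq[of u' u] by (auto simp: neq_iff)
  qed
qed

lemma le_sin_if_arcsin_le:
  fixes r \<delta> :: real
  assumes "\<bar>r\<bar> \<le> 1" "\<delta> \<le> pi / 2" "arcsin r \<le> \<delta>"
  shows "r \<le> sin \<delta>"
  using sin_monotone_2pi_le[of "arcsin r" \<delta>] arcsin_bounded[of r] assms by (simp add: abs_le_iff)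

section \<open>The potential\<close>

lemma sin_pos_of_interval:
  assumes "pa < x" "x < pb" "pb - pa \<le> pi"
  shows "0 < sin (pb - x)" "0 < sin (x - pa)"
  using assms by (auto intro!: sin_gt_zero)

lemma cos_div_sin_squared_has_derivative:
  fixes u :: real
  assumes "sin u \<noteq> 0"
  shows "((\<lambda>y. cos y / (sin y)\<^sup>2) has_real_derivative - (1 + (cos u)\<^sup>2) / (sin u) ^ 3) (at u)"
  using assms
  by (auto intro!: derivative_eq_intros simp: field_simps power2_eq_square power3_eq_cube)
     (use sin_cos_squared_add[of u] in algebra)

lemma Vpot_twice_differentiable:
  fixes pa pb b1 b2 :: real
  assumes ab: "pb - pa \<le> pi" and x: "x \<in> {pa<..<pb}"
    and Vh': "\<And>y. y \<in> {pa<..<pb} \<Longrightarrow> (Vh has_real_derivative Vh' y) (at y)"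
    and Vh'': "\<And>y. y \<in> {pa<..<pb} \<Longrightarrow> (Vh' has_real_derivative Vh'' y) (at y)"
  defines "V \<equiv> Vpot pa pb b1 b2 Vh"
  shows "(V has_real_derivative deriv V x) (at x)"
    and "(deriv V has_real_derivative deriv (deriv V) x) (at x)"
proof -
  define g :: "real \<Rightarrow> real" where "g u = cos u / (sin u)\<^sup>2" for u
  define g' :: "real \<Rightarrow> real" where "g' u = - (1 + (cos u)\<^sup>2) / (sin u) ^ 3" for u
  have g': "(g has_real_derivative g' u) (at u)" if "sin u \<noteq> 0" for u
    using cos_div_sin_squared_has_derivative[OF that] by (simp add: g_def[abs_def] g'_def)
  define DV where "DV y = b1 * g (pb - y) - b2 * g (y - pa) + Vh' y" for y
  have DV: "(V has_real_derivative DV y) (at y)" if y: "y \<in> {pa<..<pb}" for y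
  proof -
    have "sin (pb - y) \<noteq> 0" "sin (y - pa) \<noteq> 0"
      using sin_pos_of_interval[of pa y pb] y ab by auto
    then show ?thesis unfolding V_def Vpot_def[abs_def] DV_def g_def
      by (auto intro!: derivative_eq_intros Vh'[OF y] simp: field_simps power2_eq_square)
  qed
  then show "(V has_real_derivative deriv V x) (at x)"
    using x DERIV_imp_deriv by fastforce
  have s: "sin (pb - x) \<noteq> 0" "sin (x - pa) \<noteq> 0"
    using sin_pos_of_interval[of pa x pb] x ab by auto
  have d1: "((\<lambda>y. g (pb - y)) has_real_derivative g' (pb - x) * - 1) (at x)"
    by (rule DERIV_chain2[where g="\<lambda>y. pb - y", OF g'[OF s(1)]]) (auto intro!: derivative_eq_intros)
  have d2: "((\<lambda>y. g (y - pa)) has_real_derivative g' (x - pa) * 1) (at x)"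
    by (rule DERIV_chain2[where g="\<lambda>y. y - pa", OF g'[OF s(2)]]) (auto intro!: derivative_eq_intros)
  have "(DV has_real_derivative
      b1 * (g' (pb - x) * - 1) - b2 * (g' (x - pa) * 1) + Vh'' x) (at x)"
    unfolding DV_def by (rule DERIV_add[OF DERIV_diff[OF DERIV_cmult[OF d1] DERIV_cmult[OF d2]] Vh''[OF x]])
  moreover have "DV y = deriv V y" if "y \<in> {pa<..<pb}" for y
    using DV[OF that] by (simp add: DERIV_imp_deriv)
  ultimately have "(deriv V has_real_derivative
      b1 * (g' (pb - x) * - 1) - b2 * (g' (x - pa) * 1) + Vh'' x) (at x)"
    using x by (auto elim!: has_field_derivative_transform_within_open[where S="{pa<..<pb}"])
  then show "(deriv V has_real_derivative deriv (deriv V) x) (at x)"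
    by (simp add: DERIV_imp_deriv)
qed

lemma Vpot_unbounded_at_right_end:
  fixes pa pb b1 b2 M y :: real
  assumes ab: "pb - pa \<le> pi" and y: "y \<in> {pa<..<pb}"
    and b1: "0 < b1" and b2: "0 \<le> b2" and Vh_pos: "\<forall>x\<in>{pa..pb}. Vh x > 0"
  shows "\<exists>x\<in>{y<..<pb}. M < Vpot pa pb b1 b2 Vh x"
proof -
  define \<delta> where "\<delta> = min ((pb - y) / 2) (b1 / (2 * max M 1))"
  have \<delta>: "0 < \<delta>" "\<delta> \<le> (pb - y) / 2" "\<delta> \<le> b1 / (2 * max M 1)"
    using y b1 unfolding \<delta>_def by (simp_all only: min.cobounded1 min.cobounded2) simp
  then have x: "pb - \<delta> \<in> {y<..<pb}" by auto
  have "M < b1 / \<delta>"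
  proof -
    have "2 * max M 1 \<le> b1 / \<delta>" using \<delta> b1 by (simp add: field_simps)
    then show ?thesis by linarith
  qed
  also have "b1 / \<delta> \<le> b1 / sin \<delta>"
    using \<delta> b1 sin_pos_of_interval[of pa "pb - \<delta>" pb] x y ab
    by (intro divide_left_mono sin_x_le_x) auto
  also have "b1 / sin \<delta> \<le> Vpot pa pb b1 b2 Vh (pb - \<delta>)"
  proof -
    have "0 \<le> b2 / sin (pb - \<delta> - pa)"
      using b2 sin_pos_of_interval[of pa "pb - \<delta>" pb] x y ab by simp
    moreover have "0 < Vh (pb - \<delta>)" using Vh_pos x y by auto
    ultimately show ?thesis by (simp add: Vpot_def)
  qed
  finally show ?thesis using x by blast
qed

lemma fcoef_pos:
  assumes "pa < x" "x < pb" "pb - pa \<le> pi"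
  shows "0 < fcoef pa pb x"
  using sin_pos_of_interval[OF assms] by (simp add: fcoef_def)

lemma on_coll_mfd_energy:
  fixes f U v w :: real
  assumes f: "0 < f" and U: "0 < U"
    and mfd: "w\<^sup>2 / (2 * f) + f / (f * U) * v\<^sup>2 / 2 = 1"
  shows "v\<^sup>2 \<le> 2 * U" and "w = 0 \<Longrightarrow> v\<^sup>2 = 2 * U"
    and "sqrt (f * U) - f / sqrt (f * U) * v\<^sup>2 / 2 = \<bar>w\<bar> * sqrt (2 * U - v\<^sup>2) / 2"
proof -
  have energy: "w\<^sup>2 * U = f * (2 * U - v\<^sup>2)" using mfd f U by (simp add: field_simps)
  then have "0 \<le> f * (2 * U - v\<^sup>2)" using U by (metis zero_le_mult_iff zero_le_power2 less_imp_le)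
  then show le: "v\<^sup>2 \<le> 2 * U" using f by (simp add: zero_le_mult_iff)
  show "w = 0 \<Longrightarrow> v\<^sup>2 = 2 * U" using energy f by simp
  define A where "A = 2 * U - v\<^sup>2"
  define q where "q = sqrt (f * U)"
  have A: "0 \<le> A" using le by (simp add: A_def)
  have q: "0 < q" "q\<^sup>2 = f * U" using f U by (simp_all add: q_def)
  have w2: "w\<^sup>2 = f * A / U" using energy U by (simp add: A_def field_simps)
  have "(\<bar>w\<bar> * sqrt A)\<^sup>2 = f * A * A / U" using A by (simp add: power_mult_distrib w2)
  also have "\<dots> = A\<^sup>2 * q\<^sup>2 / U\<^sup>2" unfolding q(2) using U by (simp add: power2_eq_square)
  also have "\<dots> = (A * q / U)\<^sup>2" by (simp add: power_divide power_mult_distrib)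
  finally have "\<bar>w\<bar> * sqrt A = A * q / U"
    using A U q by (simp add: power2_eq_iff_nonneg)
  moreover have "q - f / q * v\<^sup>2 / 2 = A * q / (2 * U)"
    using q U by (simp add: A_def field_simps power2_eq_square)
  ultimately show "sqrt (f * U) - f / sqrt (f * U) * v\<^sup>2 / 2 = \<bar>w\<bar> * sqrt (2 * U - v\<^sup>2) / 2"
    by (simp add: A_def q_def)
qed

lemma interior_derivatives_of_C3:
  assumes "C3_on a b g"
  obtains g' g'' where
    "\<And>x. x \<in> {a<..<b} \<Longrightarrow> (g has_real_derivative g' x) (at x)"
    "\<And>x. x \<in> {a<..<b} \<Longrightarrow> (g' has_real_derivative g'' x) (at x)"
proof -
  obtain g1 g2 where g: "\<forall>x\<in>{a..b}. (g has_real_derivative g1 x) (at x within {a..b}) \<and>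
      (g1 has_real_derivative g2 x) (at x within {a..b})"
    using assms unfolding C3_on_def by blast
  have "at x within {a..b} = at x" if "x \<in> {a<..<b}" for x
    using that by (intro at_within_Icc_at) auto
  then show ?thesis using g that[of g1 g2] by (metis greaterThanLessThan_iff atLeastAtMost_iff less_imp_le)
qed

locale symmetric_double_well =
  fixes V :: "real \<Rightarrow> real" and pa pb pL pm pR :: real
  assumes midpoint: "pm = (pa + pb) / 2"
    and V_deriv: "\<And>x. x \<in> {pa<..<pb} \<Longrightarrow> (V has_real_derivative deriv V x) (at x)"
    and V'_deriv: "\<And>x. x \<in> {pa<..<pb} \<Longrightarrow> (deriv V has_real_derivative deriv (deriv V) x) (at x)"
    and symmetric: "\<And>x. pm + x \<in> {pa<..<pb} \<Longrightarrow> V (pm + x) = V (pm - x)"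
    and crit_order: "pL < pm" "pm < pR"
    and critical_points: "{x\<in>{pa<..<pb}. deriv V x = 0} = {pL, pm, pR}"
    and nondegenerate_pR: "deriv (deriv V) pR \<noteq> 0"
    and unbounded_at_pb: "\<And>M y. y \<in> {pa<..<pb} \<Longrightarrow> \<exists>x\<in>{y<..<pb}. M < V x"
begin

lemma critical_points_in_interval: "pL \<in> {pa<..<pb}" "pm \<in> {pa<..<pb}" "pR \<in> {pa<..<pb}"
  using critical_points by blast+

lemma deriv_eq_0_iff: "x \<in> {pa<..<pb} \<Longrightarrow> deriv V x = 0 \<longleftrightarrow> x \<in> {pL, pm, pR}"
  using critical_points by blast

lemma continuous_on_Icc:
  assumes "pa < x" "y < pb"
  shows "continuous_on {x..y} V"
proof (intro continuous_at_imp_continuous_on ballI)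
  fix z assume "z \<in> {x..y}"
  then show "isCont V z" using assms V_deriv[of z] by (auto intro: DERIV_isCont)
qed

lemma V_reflect:
  assumes "x \<in> {pa<..<pb}"
  shows "V (2 * pm - x) = V x"
proof -
  have "pm + (pm - x) \<in> {pa<..<pb}" using assms midpoint by auto
  from symmetric[OF this] show ?thesis by (simp add: algebra_simps mult_2)
qed

lemma pR_reflects_pL: "pR = 2 * pm - pL"
proof -
  have pL: "pL \<in> {pa<..<pb}" and reflected: "2 * pm - pL \<in> {pa<..<pb}"
    using critical_points_in_interval crit_order midpoint by auto
  have "((\<lambda>y. V (2 * pm - y)) has_real_derivative deriv V pL * - 1) (at (2 * pm - pL))"
    using V_deriv[OF pL] by (intro DERIV_chain2[where f=V]) (auto intro!: derivative_eq_intros)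
  then have "(V has_real_derivative 0) (at (2 * pm - pL))"
    using deriv_eq_0_iff[OF pL] reflected
    by (auto elim!: has_field_derivative_transform_within_open[where S="{pa<..<pb}"] intro: V_reflect)
  then have "deriv V (2 * pm - pL) = 0" by (rule DERIV_imp_deriv)
  then show ?thesis using deriv_eq_0_iff[OF reflected] crit_order by auto
qed

lemma V_pR_eq_V_pL: "V pR = V pL"
  using V_reflect[of pL] critical_points_in_interval crit_order by (simp add: pR_reflects_pL)

lemma strict_mono_on_if_no_critical_points:
  assumes "pa < x" "x < y" "y < pb" "{x<..<y} \<inter> {pL, pm, pR} = {}" "V x \<le> V y"
  shows "strict_mono_on {x..y} V"
proof -
  have "inj_on V {x..y}"
    using assms V_deriv deriv_eq_0_iff
    by (intro inj_on_Icc_if_no_critical_points[where f'="deriv V"] continuous_on_Icc) auto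
  then have "strict_mono_on {x..y} V \<or> strict_antimono_on {x..y} V"
    using continuous_on_Icc assms by (simp add: injective_eq_monotone_map)
  moreover have "\<not> strict_antimono_on {x..y} V"
    using assms by (auto dest: monotone_onD[of _ _ _ _ x y])
  ultimately show ?thesis by blast
qed

lemma strict_mono_on_right_of_pR:
  assumes "y \<in> {pR<..<pb}"
  shows "strict_mono_on {pR..y} V"
proof -
  obtain x where x: "y < x" "x < pb" "V pL < V x"
    using unbounded_at_pb[of y "V pL"] assms critical_points_in_interval crit_order by auto
  have "strict_mono_on {pR..x} V"
    using x assms crit_order critical_points_in_interval V_pR_eq_V_pL
    by (intro strict_mono_on_if_no_critical_points) auto
  then show ?thesis using x by (auto elim: monotone_on_subset)
qed

lemma V_pL_less_right: "x \<in> {pR<..<pb} \<Longrightarrow> V pL < V x"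
  using strict_mono_on_right_of_pR[of x] V_pR_eq_V_pL by (auto dest: strict_mono_onD[of _ _ pR x])

lemma V_pL_less_left:
  assumes "x \<in> {pa<..<pL}"
  shows "V pL < V x"
proof -
  have "2 * pm - x \<in> {pR<..<pb}"
    using assms by (auto simp: pR_reflects_pL midpoint field_simps)
  moreover have "x \<in> {pa<..<pb}" using assms critical_points_in_interval by auto
  ultimately show ?thesis using V_pL_less_right V_reflect by metis
qed

text \<open>Otherwise V would increase on [pm, pb) through pR, so that deriv V \<ge> 0 would have a
  local minimum at pR.\<close>

lemma V_pL_less_V_pm: "V pL < V pm"
proof (rule ccontr)
  assume "\<not> V pL < V pm"
  then have left: "strict_mono_on {pm..pR} V"
    using crit_order critical_points_in_interval V_pR_eq_V_pL
    by (intro strict_mono_on_if_no_critical_points) auto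
  define y where "y = (pR + pb) / 2"
  have y: "y \<in> {pR<..<pb}" using critical_points_in_interval by (auto simp: y_def)
  have "mono_on {pm..y} V"
    using strict_mono_on_Icc_join[OF left strict_mono_on_right_of_pR[OF y]]
    by (rule strict_mono_on_imp_mono_on)
  then have nonneg: "0 \<le> deriv V z" if "pm < z" "z < y" for z
  proof (rule mono_on_has_real_derivative_nonneg[OF _ that V_deriv])
    show "z \<in> {pa<..<pb}" using that y critical_points_in_interval by auto
  qed
  have "deriv (deriv V) pR = 0"
  proof (rule DERIV_local_min[OF V'_deriv])
    show "pR \<in> {pa<..<pb}" by (rule critical_points_in_interval)
    show "0 < min (pR - pm) (y - pR)" using crit_order y by simp
    show "\<forall>z. \<bar>pR - z\<bar> < min (pR - pm) (y - pR) \<longrightarrow> deriv V pR \<le> deriv V z"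
      using nonneg deriv_eq_0_iff[of pR] critical_points_in_interval by (auto simp: abs_less_iff)
  qed
  with nondegenerate_pR show False by contradiction
qed

lemma strict_mono_on_pL_pm: "strict_mono_on {pL..pm} V"
  using crit_order critical_points_in_interval V_pL_less_V_pm
  by (intro strict_mono_on_if_no_critical_points) auto

lemma V_pL_less: "pa < x \<Longrightarrow> x \<le> pm \<Longrightarrow> x \<noteq> pL \<Longrightarrow> V pL < V x"
  using V_pL_less_left[of x] strict_mono_on_pL_pm crit_order
  by (cases "x < pL") (auto dest: monotone_onD[of _ _ _ _ pL x])

lemma V_less_V_pm: "pL \<le> x \<Longrightarrow> x < pm \<Longrightarrow> V x < V pm"
  using strict_mono_on_pL_pm by (auto dest: monotone_onD[of _ _ _ _ x pm])

end

section \<open>The branch on the collision manifold\<close>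

text \<open>The branch gamma' in reduced form: the manifold relation has been used to rewrite the
  v-equation and to read off the energy facts. The shape of
  U on (a, pm] is what the potential provides.\<close>

locale collision_orbit =
  fixes U v ph w :: "real \<Rightarrow> real" and a pL pm s3 :: real
  assumes v_cont: "continuous_on {..s3} v"
    and ph_cont: "continuous_on {..s3} ph"
    and ph_deriv: "\<And>s. s < s3 \<Longrightarrow> (ph has_real_derivative w s) (at s)"
    and v_deriv: "\<And>s. s < s3 \<Longrightarrow>
      (v has_real_derivative \<bar>w s\<bar> * sqrt (2 * U (ph s) - (v s)\<^sup>2) / 2) (at s)"
    and energy_bound: "\<And>s. s \<le> s3 \<Longrightarrow> (v s)\<^sup>2 \<le> 2 * U (ph s)"
    and energy_turning: "\<And>s. s \<le> s3 \<Longrightarrow> w s = 0 \<Longrightarrow> (v s)\<^sup>2 = 2 * U (ph s)"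
    and v_lim: "(v \<longlongrightarrow> - sqrt (2 * U pL)) at_bot"
    and ph_lim: "(ph \<longlongrightarrow> pL) at_bot"
    and ph_reach: "ph s3 = pm"
    and ph_first: "\<And>s. s < s3 \<Longrightarrow> ph s \<noteq> pm"
    and ph_lower: "\<And>s. s \<le> s3 \<Longrightarrow> a < ph s"
    and pL_less_pm: "pL < pm"
    and U_pL_pos: "0 < U pL"
    and U_pL_less: "\<And>x. a < x \<Longrightarrow> x \<le> pm \<Longrightarrow> x \<noteq> pL \<Longrightarrow> U pL < U x"
    and U_less_U_pm: "\<And>x. pL \<le> x \<Longrightarrow> x < pm \<Longrightarrow> U x < U pm"
begin

lemma continuous_on_Icc_ph: "t \<le> s3 \<Longrightarrow> continuous_on {s..t} ph"
  by (rule continuous_on_subset[OF ph_cont]) auto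

lemma continuous_on_Icc_v: "t \<le> s3 \<Longrightarrow> continuous_on {s..t} v"
  by (rule continuous_on_subset[OF v_cont]) auto

lemma v_mono:
  assumes "x \<le> y" "y \<le> s3"
  shows "v x \<le> v y"
proof (rule DERIV_nonneg_imp_increasing_open[OF assms(1)])
  fix z assume "x < z" "z < y"
  with assms show "\<exists>D. (v has_real_derivative D) (at z) \<and> 0 \<le> D"
    using v_deriv[of z] energy_bound[of z] by auto
qed (rule continuous_on_Icc_v[OF assms(2)])

lemma v_lower_bound: "s \<le> s3 \<Longrightarrow> - sqrt (2 * U pL) \<le> v s"
  by (rule tendsto_le[OF trivial_limit_at_bot_linorder tendsto_const v_lim])
     (auto simp: eventually_at_bot_linorder intro: v_mono)

lemma ph_less_pm: "s < s3 \<Longrightarrow> ph s < pm"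
proof (rule ccontr)
  assume s: "s < s3" and "\<not> ph s < pm"
  then have "pm \<le> ph s" by simp
  obtain u where u: "u \<le> s" "ph u < pm"
    using eventually_at_bot_exists_le[OF order_tendstoD(2)[OF ph_lim pL_less_pm]] by blast
  then obtain z where "u \<le> z" "z \<le> s" "ph z = pm"
    using IVT'[of ph u pm s] \<open>pm \<le> ph s\<close> continuous_on_Icc_ph s by auto
  then show False using ph_first s by auto
qed

lemma ph_le_pm: "s \<le> s3 \<Longrightarrow> ph s \<le> pm"
  using ph_less_pm[of s] ph_reach by (cases "s = s3") auto

lemma w_zero_at_interior_extremum:
  assumes "s0 < m" "m < s1" "s1 \<le> s3"
    and extremum: "(\<forall>y\<in>{s0..s1}. ph m \<le> ph y) \<or> (\<forall>y\<in>{s0..s1}. ph y \<le> ph m)"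
  shows "w m = 0"
proof -
  have d: "0 < min (m - s0) (s1 - m)" using assms by simp
  have near: "y \<in> {s0..s1}" if "\<bar>m - y\<bar> < min (m - s0) (s1 - m)" for y
    using that by (auto simp: abs_less_iff)
  from extremum show ?thesis
  proof
    assume "\<forall>y\<in>{s0..s1}. ph m \<le> ph y"
    then show ?thesis using DERIV_local_min[OF ph_deriv d] near assms by auto
  next
    assume "\<forall>y\<in>{s0..s1}. ph y \<le> ph m"
    then show ?thesis using DERIV_local_max[OF ph_deriv d] near assms by auto
  qed
qed

lemma v_at_turning_point:
  assumes "s < s3" "w s = 0" "ph s \<noteq> pL"
  shows "sqrt (2 * U pL) < v s"
proof -
  have "2 * U pL < (v s)\<^sup>2"
    using energy_turning[of s] U_pL_less[of "ph s"] ph_lower[of s] ph_le_pm[of s] assms by auto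
  then have "sqrt (2 * U pL) < \<bar>v s\<bar>" using real_sqrt_less_mono by fastforce
  then show ?thesis using v_lower_bound[of s] assms by linarith
qed

lemma ph_ge_pL: "s \<le> s3 \<Longrightarrow> pL \<le> ph s"
proof (rule ccontr)
  assume s: "s \<le> s3" and "\<not> pL \<le> ph s"
  then have below: "ph s < pL" by simp
  then have "s < s3" using s ph_reach pL_less_pm by (cases "s = s3") auto
  obtain s0 where s0: "s0 \<le> s - 1" "ph s < ph s0"
    using eventually_at_bot_exists_le[OF order_tendstoD(1)[OF ph_lim below]] by blast
  obtain m where m: "m \<in> {s0..s3}" "\<forall>y\<in>{s0..s3}. ph m \<le> ph y"
    using continuous_attains_inf[of "{s0..s3}" ph] continuous_on_Icc_ph s0 \<open>s < s3\<close> by auto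
  then have "ph m \<le> ph s" using s0 s by auto
  then have m_interior: "s0 < m" "m < s3"
    using m s0 below ph_reach pL_less_pm by (auto simp: order.order_iff_strict)
  have "sqrt (2 * U pL) < v m"
    using v_at_turning_point w_zero_at_interior_extremum m m_interior \<open>ph m \<le> ph s\<close> below by auto
  obtain c where c: "m \<le> c" "c \<le> s3" "ph c = pL"
    using IVT'[of ph m pL s3] \<open>ph m \<le> ph s\<close> below ph_reach pL_less_pm m_interior
      continuous_on_Icc_ph by auto
  have "sqrt (2 * U pL) < v c"
    using \<open>sqrt (2 * U pL) < v m\<close> v_mono[of m c] c by simp
  then have "(sqrt (2 * U pL))\<^sup>2 < (v c)\<^sup>2" using U_pL_pos by (intro power_strict_mono) auto
  then have "2 * U pL < (v c)\<^sup>2" using U_pL_pos by simp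
  then show False using energy_bound[of c] c by simp
qed

text \<open>A sign change of w would produce a local maximum of ph above pL before t, where
  v > 0 by the previous lemma.\<close>

lemma w_nonneg_while_v_nonpos:
  assumes t: "t \<le> s3" "v t \<le> 0" and s: "s < t"
  shows "0 \<le> w s"
proof (rule ccontr)
  assume "\<not> 0 \<le> w s"
  then obtain d where d: "0 < d" "\<forall>h>0. h < d \<longrightarrow> ph s < ph (s - h)"
    using DERIV_neg_dec_left[OF ph_deriv[of s]] s t by auto
  define s' where "s' = s - d / 2"
  have "ph s < ph s'" "s' < s" using d by (simp_all add: s'_def)
  then have "pL < ph s'" using ph_ge_pL[of s] s t by simp
  then obtain s0 where s0: "s0 \<le> s' - 1" "ph s0 < ph s'"
    using eventually_at_bot_exists_le[OF order_tendstoD(2)[OF ph_lim]] by blast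
  have "s0 \<le> s" "s \<le> s3" using s0 \<open>s' < s\<close> s t by simp_all
  then obtain p where p: "p \<in> {s0..s}" "\<forall>y\<in>{s0..s}. ph y \<le> ph p"
    using continuous_attains_sup[of "{s0..s}" ph] continuous_on_Icc_ph[of s s0] by auto
  then have "ph s' \<le> ph p" using s0 \<open>s' < s\<close> by auto
  then have "p \<noteq> s0" "p \<noteq> s" using s0 \<open>ph s < ph s'\<close> by auto
  then have p_interior: "s0 < p" "p < s" using p(1) by auto
  have "w p = 0"
    using w_zero_at_interior_extremum[of s0 p s] p p_interior s t by auto
  moreover have "ph p \<noteq> pL" using \<open>pL < ph s'\<close> \<open>ph s' \<le> ph p\<close> by simp
  ultimately have "sqrt (2 * U pL) < v p"
    using v_at_turning_point[of p] p_interior s t by simp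
  moreover have "0 \<le> sqrt (2 * U pL)" using U_pL_pos by simp
  ultimately have "0 < v p" by linarith
  moreover have "v p \<le> v t" using v_mono p_interior s t by simp
  ultimately show False using t by simp
qed

lemma U_pL_less_U_pm: "U pL < U pm"
  using U_pL_less[of pm] pL_less_pm ph_lower[of s3] ph_reach by simp

lemma v_sq_less_before_pm: "s < s3 \<Longrightarrow> (v s)\<^sup>2 < 2 * U pm"
  using energy_bound[of s] U_less_U_pm[OF ph_ge_pL ph_less_pm, of s] by simp

text \<open>With S1 \<le> S2 coming from U (ph x) \<le> U pm, the derivative is w (S1 / S2 - 1) / 2 \<le> 0.\<close>

lemma arcsin_invariant_nonincreasing:
  assumes t: "t \<le> s3" "v t \<le> 0" and u: "u \<le> t"
  defines "c \<equiv> sqrt (2 * U pm)"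
  shows "arcsin (v t / c) - ph t / 2 \<le> arcsin (v u / c) - ph u / 2"
proof (rule DERIV_nonpos_imp_decreasing_open[OF u])
  have c: "0 < c" "c\<^sup>2 = 2 * U pm" using U_pL_pos U_pL_less_U_pm by (simp_all add: c_def)
  have v_range: "- c \<le> v x" "v x \<le> 0" if "x \<le> t" for x
  proof -
    have "(v x)\<^sup>2 \<le> c\<^sup>2"
      using energy_bound[of x] U_less_U_pm[OF ph_ge_pL, of x] ph_le_pm[of x] that t c
      by (cases "ph x = pm") (auto simp: order.order_iff_strict)
    then show "- c \<le> v x" using c abs_le_square_iff[of "v x" c] by simp
    show "v x \<le> 0" using v_mono[of x t] that t by simp
  qed
  have ratio_bounds: "- 1 \<le> v x / c" "v x / c \<le> 1" if "x \<le> t" for x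
  proof -
    show "- 1 \<le> v x / c" using v_range(1)[OF that] c by (simp add: field_simps)
    have "v x / c \<le> 0" using v_range(2)[OF that] c by (simp add: divide_nonpos_pos)
    then show "v x / c \<le> 1" by simp
  qed
  show "continuous_on {u..t} (\<lambda>s. arcsin (v s / c) - ph s / 2)"
    using continuous_on_Icc_v[OF t(1)] continuous_on_Icc_ph[OF t(1)] ratio_bounds c
    by (intro continuous_intros) auto
  fix x assume x: "u < x" "x < t"
  define S1 where "S1 = sqrt (2 * U (ph x) - (v x)\<^sup>2)"
  define S2 where "S2 = sqrt (2 * U pm - (v x)\<^sup>2)"
  have x3: "x < s3" using x t by simp
  have "(v x)\<^sup>2 < c\<^sup>2" using v_sq_less_before_pm[OF x3] c by simp
  then have "\<bar>v x\<bar> < c" using c by (auto intro: power2_less_imp_less)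
  then have vc: "- 1 < v x / c" "v x / c < 1" using c by (auto simp: field_simps)
  have "c * sqrt (1 - (v x / c)\<^sup>2) = sqrt (c\<^sup>2 * (1 - (v x / c)\<^sup>2))"
    using c(1) by (simp add: real_sqrt_mult)
  also have "c\<^sup>2 * (1 - (v x / c)\<^sup>2) = 2 * U pm - (v x)\<^sup>2"
    using c U_pL_less_U_pm U_pL_pos by (simp add: power_divide field_simps)
  finally have S2: "0 < S2" "c * sqrt (1 - (v x / c)\<^sup>2) = S2"
    using \<open>(v x)\<^sup>2 < c\<^sup>2\<close> c by (simp_all add: S2_def)
  have "S1 \<le> S2"
    using U_less_U_pm[OF ph_ge_pL ph_less_pm, of x] x3 by (simp add: S1_def S2_def)
  have w: "0 \<le> w x" using w_nonneg_while_v_nonpos[OF t] x by simp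
  have "((\<lambda>s. v s / c) has_real_derivative \<bar>w x\<bar> * S1 / 2 / c) (at x)"
    unfolding S1_def by (rule DERIV_cdivide[OF v_deriv[OF x3]])
  then have "((\<lambda>s. arcsin (v s / c)) has_real_derivative
      inverse (sqrt (1 - (v x / c)\<^sup>2)) * (\<bar>w x\<bar> * S1 / 2 / c)) (at x)"
    by (rule DERIV_chain2[where g="\<lambda>s. v s / c", OF DERIV_arcsin[OF vc]])
  then have "((\<lambda>s. arcsin (v s / c) - ph s / 2) has_real_derivative
      inverse (sqrt (1 - (v x / c)\<^sup>2)) * (\<bar>w x\<bar> * S1 / 2 / c) - w x / 2) (at x)"
    by (rule DERIV_diff[OF _ DERIV_cdivide[OF ph_deriv[OF x3]]])
  moreover have "inverse (sqrt (1 - (v x / c)\<^sup>2)) * (\<bar>w x\<bar> * S1 / 2 / c) = w x * S1 / (2 * S2)"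
    using w c S2 by (simp add: field_simps flip: S2(2))
  moreover have "w x * S1 / (2 * S2) \<le> w x / 2"
    using mult_left_mono[OF \<open>S1 \<le> S2\<close> w] S2 by (simp add: field_simps)
  ultimately show "\<exists>D. ((\<lambda>s. arcsin (v s / c) - ph s / 2) has_real_derivative D) (at x) \<and> D \<le> 0"
    by auto
qed

theorem arcsin_bound_if_v_nonneg:
  assumes "0 \<le> v s3"
  shows "arcsin (sqrt (U pL / U pm)) \<le> (pm - pL) / 2"
proof -
  define c where "c = sqrt (2 * U pm)"
  define r where "r = sqrt (U pL / U pm)"
  have r: "0 < r" "r < 1" using U_pL_pos U_pL_less_U_pm by (simp_all add: r_def)
  have "- sqrt (2 * U pL) < 0" using U_pL_pos by simp
  then obtain u0 where "u0 \<le> s3" "v u0 < 0"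
    using eventually_at_bot_exists_le[OF order_tendstoD(2)[OF v_lim]] by blast
  then obtain t where t: "t \<le> s3" "v t = 0"
    using IVT'[of v u0 0 s3] assms continuous_on_Icc_v by auto
  have "sqrt (2 * U pL) / c = r"
    by (simp add: c_def r_def real_sqrt_divide[symmetric])
  then have "((\<lambda>s. v s / c) \<longlongrightarrow> - r) at_bot"
    using tendsto_divide[OF v_lim tendsto_const, of c] U_pL_pos U_pL_less_U_pm
    by (simp add: c_def)
  then have "((\<lambda>s. arcsin (v s / c) - ph s / 2) \<longlongrightarrow> arcsin (- r) - pL / 2) at_bot"
    using r by (intro tendsto_intros isCont_tendsto_compose[OF isCont_arcsin] ph_lim) auto
  moreover have "\<forall>u\<le>t. arcsin (v t / c) - ph t / 2 \<le> arcsin (v u / c) - ph u / 2"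
    using arcsin_invariant_nonincreasing[of t] t unfolding c_def by auto
  then have "\<forall>\<^sub>F u in at_bot. arcsin (v t / c) - ph t / 2 \<le> arcsin (v u / c) - ph u / 2"
    unfolding eventually_at_bot_linorder by blast
  ultimately have "arcsin (v t / c) - ph t / 2 \<le> arcsin (- r) - pL / 2"
    by (rule tendsto_le[OF trivial_limit_at_bot_linorder _ tendsto_const])
  moreover have "arcsin (- r) = - arcsin r" using r by (simp add: arcsin_minus)
  ultimately show ?thesis
    using t ph_le_pm[of t] by (simp add: r_def[symmetric])
qed

theorem v_negative_at_first_hit:
  assumes "pm - pL \<le> pi" "(sin ((pm - pL) / 2))\<^sup>2 * U pm < U pL"
  shows "v s3 < 0"
proof (rule ccontr)
  assume "\<not> v s3 < 0"
  then have "arcsin (sqrt (U pL / U pm)) \<le> (pm - pL) / 2"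
    by (intro arcsin_bound_if_v_nonneg) simp
  moreover have "\<bar>sqrt (U pL / U pm)\<bar> \<le> 1" using U_pL_pos U_pL_less_U_pm by simp
  ultimately have "sqrt (U pL / U pm) \<le> sin ((pm - pL) / 2)"
    using le_sin_if_arcsin_le assms(1) by simp
  then have "(sqrt (U pL / U pm))\<^sup>2 \<le> (sin ((pm - pL) / 2))\<^sup>2"
    using U_pL_pos U_pL_less_U_pm by (intro power_mono) auto
  then have "U pL \<le> (sin ((pm - pL) / 2))\<^sup>2 * U pm"
    using U_pL_pos U_pL_less_U_pm by (simp add: field_simps)
  with assms(2) show False by simp
qed

end

lemma Vpot_symmetric_double_well:
  fixes pa pb b1 b2 pL pR :: real and Vh :: "real \<Rightarrow> real"
  defines "pm \<equiv> (pa + pb) / 2" and "V \<equiv> Vpot pa pb b1 b2 Vh"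
  assumes "pb - pa \<le> pi" "0 < b1" "0 \<le> b2" "C3_on pa pb Vh" "\<forall>x\<in>{pa..pb}. Vh x > 0"
    and "\<forall>x. pm + x \<in> {pa<..<pb} \<longrightarrow> V (pm + x) = V (pm - x)"
    and "pL < pm" "pm < pR" "{x\<in>{pa<..<pb}. deriv V x = 0} = {pL, pm, pR}"
    and "deriv (deriv V) pR \<noteq> 0"
  shows "symmetric_double_well V pa pb pL pm pR"
proof
  obtain Vh' Vh'' where
    "\<And>x. x \<in> {pa<..<pb} \<Longrightarrow> (Vh has_real_derivative Vh' x) (at x)"
    "\<And>x. x \<in> {pa<..<pb} \<Longrightarrow> (Vh' has_real_derivative Vh'' x) (at x)"
    using interior_derivatives_of_C3 assms(6) by blast
  then show "\<And>x. x \<in> {pa<..<pb} \<Longrightarrow> (V has_real_derivative deriv V x) (at x)"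
    and "\<And>x. x \<in> {pa<..<pb} \<Longrightarrow> (deriv V has_real_derivative deriv (deriv V) x) (at x)"
    unfolding V_def using Vpot_twice_differentiable[OF assms(3)] by blast+
  show "\<And>M y. y \<in> {pa<..<pb} \<Longrightarrow> \<exists>x\<in>{y<..<pb}. M < V x"
    unfolding V_def using Vpot_unbounded_at_right_end assms(3-5,7) by blast
qed (use assms(8-) pm_def in auto)

lemma collision_orbit_of_flow:
  assumes "symmetric_double_well V pa pb pL pm pR" "pb - pa \<le> pi"
    and V_pos: "\<forall>x\<in>{pa<..<pb}. V x > 0"
    and dom: "\<forall>s\<le>s3. ph s \<in> {pa<..<pb}"
    and ode_v: "\<forall>s\<le>s3. (v has_real_derivative coll_v pa pb V (v s) (ph s) (w s)) (at s within {..s3})"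
    and ode_ph: "\<forall>s\<le>s3. (ph has_real_derivative w s) (at s within {..s3})"
    and mfd: "\<forall>s\<le>s3. on_coll_mfd pa pb V (v s) (ph s) (w s)"
    and "(v \<longlongrightarrow> - sqrt (2 * V pL)) at_bot" "(ph \<longlongrightarrow> pL) at_bot"
    and "ph s3 = pm" "\<forall>s<s3. ph s \<noteq> pm"
  shows "collision_orbit V v ph w pa pL pm s3"
proof -
  interpret potential: symmetric_double_well V pa pb pL pm pR by fact
  have energy: "(v s)\<^sup>2 \<le> 2 * V (ph s) \<and> (w s = 0 \<longrightarrow> (v s)\<^sup>2 = 2 * V (ph s)) \<and>
      coll_v pa pb V (v s) (ph s) (w s) = \<bar>w s\<bar> * sqrt (2 * V (ph s) - (v s)\<^sup>2) / 2"
    if "s \<le> s3" for s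
    using on_coll_mfd_energy[OF fcoef_pos V_pos[rule_format], of pa "ph s" pb]
      mfd[rule_format, OF that] dom that assms(2)
    by (auto simp: on_coll_mfd_def coll_v_def Ffun_def Wfun_def)
  have at_open: "at s within {..s3} = at s" if "s < s3" for s
    using that by (intro at_within_open_subset[of s "{..<s3}"]) auto
  show ?thesis
  proof
    show "continuous_on {..s3} v" "continuous_on {..s3} ph"
      unfolding continuous_on_eq_continuous_within using ode_v ode_ph DERIV_continuous by blast+
    show "(ph has_real_derivative w s) (at s)" if "s < s3" for s
      using ode_ph[rule_format, of s] at_open[OF that] that by simp
    show "(v has_real_derivative \<bar>w s\<bar> * sqrt (2 * V (ph s) - (v s)\<^sup>2) / 2) (at s)"
      if "s < s3" for s
      using ode_v[rule_format, of s] at_open[OF that] energy[of s] that by simp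
    show "0 < V pL" using V_pos potential.critical_points_in_interval by blast
    show "\<And>x. pa < x \<Longrightarrow> x \<le> pm \<Longrightarrow> x \<noteq> pL \<Longrightarrow> V pL < V x"
      by (rule potential.V_pL_less)
  qed (use energy assms(8-) dom potential.crit_order potential.V_less_V_pm in auto)
qed

theorem lemma4p2:
  fixes pa pb b1 b2 :: real
    and Vh :: "real \<Rightarrow> real"
    and pL pR :: real
    and v ph w :: "real \<Rightarrow> real"
    and s3 :: real
  defines "pm \<equiv> (pa + pb) / 2"
    and "V \<equiv> Vpot pa pb b1 b2 Vh"
  assumes ab: "pa < pb" "pb - pa \<le> pi"
    and beta: "b1 > 0" "b2 \<ge> 0" "b2 = 0 \<longleftrightarrow> pb - pa = pi"
    and Vh_C3: "C3_on pa pb Vh"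
    and Vh_pos: "\<forall>x\<in>{pa..pb}. Vh x > 0"
    and Vh_bdd: "bounded (Vh ` {pa..pb})"
    and V_pos: "\<forall>x\<in>{pa<..<pb}. V x > 0"
    and V_sym: "\<forall>x. pm + x \<in> {pa<..<pb} \<longrightarrow> V (pm + x) = V (pm - x)"
    and crit_order: "pL < pm" "pm < pR"
    and crit: "{x\<in>{pa<..<pb}. deriv V x = 0} = {pL, pm, pR}"
    and nondeg: "\<forall>x\<in>{pL, pm, pR}. deriv (deriv V) x \<noteq> 0"
    and hyp: "V pR > (sin ((pR - pm) / 2))\<^sup>2 * V pm"
    \<comment> \<open>gamma' = (v, ph, w): a solution of the collision-manifold flow on ]-infinity, s3]\<close>
    and dom: "\<forall>s\<le>s3. ph s \<in> {pa<..<pb}"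
    and ode_v: "\<forall>s\<le>s3. (v has_real_derivative coll_v pa pb V (v s) (ph s) (w s)) (at s within {..s3})"
    and ode_ph: "\<forall>s\<le>s3. (ph has_real_derivative w s) (at s within {..s3})"
    and ode_w: "\<forall>s\<le>s3. (w has_real_derivative coll_w pa pb V (v s) (ph s) (w s)) (at s within {..s3})"
    and mfd: "\<forall>s\<le>s3. on_coll_mfd pa pb V (v s) (ph s) (w s)"
    \<comment> \<open>it lies in the unstable manifold of L'_- = (-sqrt(2 V pL), pL, 0)\<close>
    and lim_v: "(v \<longlongrightarrow> - sqrt (2 * V pL)) at_bot"
    and lim_ph: "(ph \<longlongrightarrow> pL) at_bot"
    and lim_w: "(w \<longlongrightarrow> 0) at_bot"
    \<comment> \<open>the branch along which initially w >= 0\<close>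
    and branch: "\<forall>\<^sub>F s in at_bot. w s \<ge> 0"
    \<comment> \<open>s3 is the first time phi reaches pm\<close>
    and reach: "ph s3 = pm"
    and first: "\<forall>s<s3. ph s \<noteq> pm"
  shows "v s3 < 0"
\<comment> \<open>The w-equation, the branch condition and the boundedness of Vh are not needed.\<close>
proof -
  interpret potential: symmetric_double_well V pa pb pL pm pR
    unfolding V_def pm_def
    by (rule Vpot_symmetric_double_well[OF ab(2) beta(1,2) Vh_C3 Vh_pos
          V_sym[unfolded V_def pm_def] crit_order[unfolded pm_def] crit[unfolded V_def pm_def]])
      (use nondeg in \<open>simp add: V_def\<close>)
  interpret orbit: collision_orbit V v ph w pa pL pm s3
    using collision_orbit_of_flow[OF potential.symmetric_double_well_axioms ab(2) V_pos dom
        ode_v ode_ph mfd lim_v lim_ph reach first] .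
  have "pm - pL \<le> pi"
  proof -
    have "pm - pL < (pb - pa) / 2"
      using potential.critical_points_in_interval by (simp add: pm_def field_simps)
    then show ?thesis using ab(2) pi_gt_zero by argo
  qed
  moreover have "(pR - pm) / 2 = (pm - pL) / 2" using potential.pR_reflects_pL by simp
  ultimately show ?thesis
    using hyp potential.V_pR_eq_V_pL by (metis orbit.v_negative_at_first_hit)
qed

end
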